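(* Let $g:[0,1)\to\mathbb{R}$ be the function defined in the context. Then $g$ attains its maximum on $[0,1)$, i.e. there exists $a^*\in[0,1)$ with $g(a^* )=\sup_{a\in[0,1)}g(a)$.
   Context: Fix $P>0$, $y_H>y_L\ge 0$, a real number $u$ and $\gamma\in(0,1]$. Let $C:[0,1)\to\mathbb{R}$ satisfy $C(0)=0$, $C$ increasing, strictly convex, twice differentiable, $C(a)\to\infty$ as $a\to1$. Let $\eta:[0,\infty)\to\mathbb{R}$ be strictly convex, increasing, twice differentiable with $\eta(0)=0$, and let $\beta\ge0$ satisfy $\gamma\eta'(\beta)=1$ (assumed to exist). For $a\in[0,1)$ define $w_L^*(a)=\max\{0,u-aC'(a)+C(a)\}$, $w_H^*(a)=w_L^*(a)+C'(a)$, $b_i^*(a)=\min\{\beta,w_i^*(a)\}$ for $i\in\{H,L\}$, and $g(a)=a\,(Py_H-w_H^*(a)+b_H^*(a)-\gamma\eta(b_H^*(a)))+(1-a)\,(Py_L-w_L^*(a)+b_L^*(a)-\gamma\eta(b_L^*(a)))$. (These are the optimal wages and thefts inducing effort $a$ in the one-shot wage-theft principal–agent problem, and $g(a)$ is the employer's resulting profit.) *)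

theory Defs
  imports "HOL-Analysis.Analysis"
begin

definition strictly_convex_on :: "real set \<Rightarrow> (real \<Rightarrow> real) \<Rightarrow> bool" where
  "strictly_convex_on S f \<longleftrightarrow>
     (\<forall>x\<in>S. \<forall>y\<in>S. \<forall>t::real. x \<noteq> y \<and> 0 < t \<and> t < 1 \<longrightarrow>
        f ((1 - t) * x + t * y) < (1 - t) * f x + t * f y)"

text \<open>Optimal wages and thefts inducing effort a; C' is the derivative of C.\<close>
definition wL :: "(real \<Rightarrow> real) \<Rightarrow> (real \<Rightarrow> real) \<Rightarrow> real \<Rightarrow> real \<Rightarrow> real" where
  "wL C C' u a = max 0 (u - a * C' a + C a)"

definition wH :: "(real \<Rightarrow> real) \<Rightarrow> (real \<Rightarrow> real) \<Rightarrow> real \<Rightarrow> real \<Rightarrow> real" where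
  "wH C C' u a = wL C C' u a + C' a"

definition theft :: "real \<Rightarrow> real \<Rightarrow> real" where
  "theft \<beta> w = min \<beta> w"

definition profit_g ::
  "real \<Rightarrow> real \<Rightarrow> real \<Rightarrow> real \<Rightarrow> real \<Rightarrow> real \<Rightarrow> (real \<Rightarrow> real) \<Rightarrow> (real \<Rightarrow> real)
     \<Rightarrow> (real \<Rightarrow> real) \<Rightarrow> real \<Rightarrow> real" where
  "profit_g P yH yL u \<gamma> \<beta> C C' \<eta> a =
     a * (P * yH - wH C C' u a + theft \<beta> (wH C C' u a) - \<gamma> * \<eta> (theft \<beta> (wH C C' u a)))
     + (1 - a) * (P * yL - wL C C' u a + theft \<beta> (wL C C' u a) - \<gamma> * \<eta> (theft \<beta> (wL C C' u a)))"

end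

theory Submission
  imports Defs
begin

text \<open>
  Theft net of disutility never yields the employer more than \<beta>, and the expected wage
  satisfies w_L(a) + a C'(a) \<ge> u + C(a). Hence g(a) \<le> P y_H + \<beta> - u - C(a), which tends
  to -\<infinity> as a \<rightarrow> 1 because C does. A continuous function on [0,1) with this behaviour
  near 1 attains its maximum on some compact interval [0,d], and that maximum is global.
\<close>

lemma mono_on_has_real_derivative_within_nonneg:
  fixes f :: "real \<Rightarrow> real"
  assumes mono: "mono_on S f"
    and deriv: "(f has_real_derivative D) (at x within S)"
    and x: "x \<in> S" "x islimpt S"
  shows "0 \<le> D"
proof (rule tendsto_lowerbound)
  show "((\<lambda>y. (f y - f x) / (y - x)) \<longlongrightarrow> D) (at x within S)"
    using deriv by (simp add: has_field_derivative_iff)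
  show "\<not> trivial_limit (at x within S)"
    using x(2) by (simp add: trivial_limit_within)
  show "\<forall>\<^sub>F y in at x within S. 0 \<le> (f y - f x) / (y - x)"
    unfolding eventually_at_filter
  proof (rule always_eventually, intro allI impI)
    fix y assume y: "y \<noteq> x" "y \<in> S"
    show "0 \<le> (f y - f x) / (y - x)"
    proof (cases "y < x")
      case True
      with y x mono have "f y \<le> f x" by (simp add: mono_onD)
      with True show ?thesis by (simp add: divide_nonpos_neg)
    next
      case False
      with y x mono have "f x \<le> f y" by (simp add: mono_onD)
      with False show ?thesis by simp
    qed
  qed
qed

lemma continuous_on_attains_sup_at_left:
  fixes f :: "real \<Rightarrow> real"
  assumes "a < b"
    and cont: "continuous_on {a..<b} f"
    and lim: "filterlim f at_bot (at_left b)"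
  shows "\<exists>x\<in>{a..<b}. \<forall>y\<in>{a..<b}. f y \<le> f x"
proof -
  have "\<forall>\<^sub>F y in at_left b. f y < f a \<and> y \<in> {a<..<b}"
    using lim eventually_at_left_real[OF \<open>a < b\<close>]
    unfolding filterlim_at_bot_dense by (auto intro: eventually_conj)
  then obtain c where "c < b" and c: "\<And>y. c < y \<Longrightarrow> y < b \<Longrightarrow> f y < f a"
    unfolding eventually_at_left[OF \<open>a < b\<close>] by blast
  define d where "d = max a c"
  have "a \<le> d" "d < b"
    using \<open>a < b\<close> \<open>c < b\<close> by (auto simp: d_def)
  have "continuous_on {a..d} f"
    using cont by (rule continuous_on_subset) (use \<open>d < b\<close> in auto)
  then obtain x where x: "x \<in> {a..d}" and max: "\<And>y. y \<in> {a..d} \<Longrightarrow> f y \<le> f x"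
    using continuous_attains_sup[of "{a..d}" f] \<open>a \<le> d\<close> by auto
  have "f y \<le> f x" if "y \<in> {a..<b}" for y
  proof (cases "y \<le> d")
    case True
    with that show ?thesis by (intro max) simp
  next
    case False
    then have "f y < f a" using that by (intro c) (auto simp: d_def)
    also have "f a \<le> f x" using \<open>a \<le> d\<close> by (intro max) simp
    finally show ?thesis by simp
  qed
  moreover have "x \<in> {a..<b}" using x \<open>d < b\<close> by simp
  ultimately show ?thesis by blast
qed

lemma theft_net_gain_le:
  assumes "0 \<le> \<beta>" "0 \<le> \<gamma>" "0 \<le> w"
    and "\<eta> 0 = 0" "mono_on {0..} \<eta>"
  shows "theft \<beta> w - \<gamma> * \<eta> (theft \<beta> w) \<le> \<beta>"
proof -
  have "\<eta> 0 \<le> \<eta> (theft \<beta> w)"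
    using assms by (intro mono_onD[OF \<open>mono_on {0..} \<eta>\<close>]) (auto simp: theft_def)
  then have "0 \<le> \<gamma> * \<eta> (theft \<beta> w)"
    using assms by simp
  moreover have "theft \<beta> w \<le> \<beta>" by (simp add: theft_def)
  ultimately show ?thesis by linarith
qed

lemma profit_g_le:
  assumes "0 \<le> a" "a \<le> 1" "0 \<le> C' a" "P * yL \<le> P * yH"
    and "0 \<le> \<beta>" "0 \<le> \<gamma>" "\<eta> 0 = 0" "mono_on {0..} \<eta>"
  shows "profit_g P yH yL u \<gamma> \<beta> C C' \<eta> a \<le> P * yH + \<beta> - u - C a"
proof -
  let ?wL = "wL C C' u a" and ?wH = "wH C C' u a"
  have "0 \<le> ?wL" by (simp add: wL_def)
  then have "0 \<le> ?wH" using assms(3) by (simp add: wH_def)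
  have high: "P * yH - ?wH + theft \<beta> ?wH - \<gamma> * \<eta> (theft \<beta> ?wH) \<le> P * yH - ?wH + \<beta>"
    using theft_net_gain_le[of \<beta> \<gamma> ?wH \<eta>] \<open>0 \<le> ?wH\<close> assms by simp
  have low: "P * yL - ?wL + theft \<beta> ?wL - \<gamma> * \<eta> (theft \<beta> ?wL) \<le> P * yH - ?wL + \<beta>"
    using theft_net_gain_le[of \<beta> \<gamma> ?wL \<eta>] \<open>0 \<le> ?wL\<close> assms by simp
  have "profit_g P yH yL u \<gamma> \<beta> C C' \<eta> a
          \<le> a * (P * yH - ?wH + \<beta>) + (1 - a) * (P * yH - ?wL + \<beta>)"
    unfolding profit_g_def
    using mult_left_mono[OF high \<open>0 \<le> a\<close>] mult_left_mono[OF low, of "1 - a"] \<open>a \<le> 1\<close>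
    by linarith
  also have "\<dots> = P * yH + \<beta> - (?wL + a * C' a)"
    by (simp add: wH_def algebra_simps)
  also have "\<dots> \<le> P * yH + \<beta> - u - C a"
    using max.cobounded2[of "u - a * C' a + C a" 0] by (simp add: wL_def)
  finally show ?thesis .
qed

lemma continuous_on_profit_g:
  assumes "continuous_on S C" "continuous_on S C'" "continuous_on {0..} \<eta>"
    and "\<And>a. a \<in> S \<Longrightarrow> 0 \<le> C' a" "0 \<le> \<beta>"
  shows "continuous_on S (profit_g P yH yL u \<gamma> \<beta> C C' \<eta>)"
proof -
  have wL: "continuous_on S (wL C C' u)" and wH: "continuous_on S (wH C C' u)"
    unfolding wL_def [abs_def] wH_def [abs_def] using assms(1,2)
    by (auto intro!: continuous_intros)
  have "0 \<le> theft \<beta> (wL C C' u a)" "0 \<le> theft \<beta> (wH C C' u a)" if "a \<in> S" for a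
    using assms(4)[OF that] \<open>0 \<le> \<beta>\<close> by (auto simp: theft_def wH_def wL_def)
  then have "continuous_on S (\<lambda>a. \<eta> (theft \<beta> (wL C C' u a)))"
      and "continuous_on S (\<lambda>a. \<eta> (theft \<beta> (wH C C' u a)))"
    unfolding theft_def
    by (auto intro!: continuous_on_compose2[OF assms(3)] continuous_intros wL wH)
  with wL wH show ?thesis
    unfolding profit_g_def [abs_def] theft_def by (intro continuous_intros)
qed

theorem proposition3:
  fixes P yH yL u \<gamma> \<beta> :: real
    and C C' C'' \<eta> \<eta>' \<eta>'' :: "real \<Rightarrow> real"
  assumes P: "P > 0"
    and y: "yH > yL" "yL \<ge> 0"
    and gam: "0 < \<gamma>" "\<gamma> \<le> 1"
    and C0: "C 0 = 0"
    and Cmono: "mono_on {0..<1} C"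
    and Cconv: "strictly_convex_on {0..<1} C"
    and C'_deriv: "\<And>a. a \<in> {0..<1} \<Longrightarrow> (C has_real_derivative C' a) (at a within {0..<1})"
    and C''_deriv: "\<And>a. a \<in> {0..<1} \<Longrightarrow> (C' has_real_derivative C'' a) (at a within {0..<1})"
    and Clim: "filterlim C at_top (at_left 1)"
    and eta0: "\<eta> 0 = 0"
    and eta_mono: "mono_on {0..} \<eta>"
    and eta_conv: "strictly_convex_on {0..} \<eta>"
    and eta'_deriv: "\<And>x. x \<in> {0..} \<Longrightarrow> (\<eta> has_real_derivative \<eta>' x) (at x within {0..})"
    and eta''_deriv: "\<And>x. x \<in> {0..} \<Longrightarrow> (\<eta>' has_real_derivative \<eta>'' x) (at x within {0..})"
    and beta: "\<beta> \<ge> 0" "\<gamma> * \<eta>' \<beta> = 1"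
  shows "\<exists>a\<^sub>0\<in>{0..<1}. \<forall>a\<in>{0..<1}.
           profit_g P yH yL u \<gamma> \<beta> C C' \<eta> a \<le> profit_g P yH yL u \<gamma> \<beta> C C' \<eta> a\<^sub>0"
proof (rule continuous_on_attains_sup_at_left)
  have C'_nonneg: "0 \<le> C' a" if "a \<in> {0..<1}" for a
    using mono_on_has_real_derivative_within_nonneg[OF Cmono C'_deriv] that
    by simp
  have "continuous_on {0..<1} C" "continuous_on {0..<1} C'" "continuous_on {0..} \<eta>"
    using C'_deriv C''_deriv eta'_deriv
    by (meson DERIV_continuous continuous_on_eq_continuous_within)+
  then show "continuous_on {0..<1} (profit_g P yH yL u \<gamma> \<beta> C C' \<eta>)"
    using C'_nonneg beta(1) by (rule continuous_on_profit_g)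
  have "filterlim (\<lambda>a. C a - (P * yH + \<beta> - u)) at_top (at_left 1)"
    using filterlim_tendsto_add_at_top[OF tendsto_const[of "u - P * yH - \<beta>"] Clim]
    by (simp add: algebra_simps)
  moreover have "\<forall>\<^sub>F a in at_left 1.
      C a - (P * yH + \<beta> - u) \<le> - profit_g P yH yL u \<gamma> \<beta> C C' \<eta> a"
    using eventually_at_left_real[OF zero_less_one]
  proof eventually_elim
    case (elim a)
    have "P * yL \<le> P * yH" using P y by simp
    with elim gam beta eta0 eta_mono C'_nonneg[of a]
    have "profit_g P yH yL u \<gamma> \<beta> C C' \<eta> a \<le> P * yH + \<beta> - u - C a"
      by (intro profit_g_le) auto
    then show ?case by simp
  qed
  ultimately show "filterlim (profit_g P yH yL u \<gamma> \<beta> C C' \<eta>) at_bot (at_left 1)"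
    unfolding filterlim_uminus_at_bot by (rule filterlim_at_top_mono)
qed simp

end
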